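(* Let $X$ and $Y$ be spaces. If $X$ is strongly $Y$-selective, then every subspace of $X$ is strongly $Y$-selective; if $X$ is $Y$-selective, then every closed subspace of $X$ is $Y$-selective.
   Context: All spaces are assumed $T_1$. For spaces $Y$, $X$, a map $\varphi:Y\to\mathcal P(X)\setminus\{\emptyset\}$ is lower semicontinuous (l.s.c.) if $\{y:\varphi(y)\cap U\neq\emptyset\}$ is open in $Y$ for every open $U\subseteq X$; a selection is a map $f:Y\to X$ with $f(y)\in\varphi(y)$ for all $y$. $X$ is strongly $Y$-selective if every l.s.c. map $Y\to\mathcal P(X)\setminus\{\emptyset\}$ has a continuous selection, and $Y$-selective if every l.s.c. map from $Y$ to the nonempty closed subsets of $X$ has a continuous selection. *)

theory Defs
  imports "HOL-Analysis.Analysis"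
begin

definition lsc_map :: "'b topology \<Rightarrow> 'a topology \<Rightarrow> ('b \<Rightarrow> 'a set) \<Rightarrow> bool" where
  "lsc_map Y X \<phi> \<longleftrightarrow>
     (\<forall>y\<in>topspace Y. \<phi> y \<subseteq> topspace X \<and> \<phi> y \<noteq> {}) \<and>
     (\<forall>U. openin X U \<longrightarrow> openin Y {y \<in> topspace Y. \<phi> y \<inter> U \<noteq> {}})"

definition has_continuous_selection :: "'b topology \<Rightarrow> 'a topology \<Rightarrow> ('b \<Rightarrow> 'a set) \<Rightarrow> bool" where
  "has_continuous_selection Y X \<phi> \<longleftrightarrow>
     (\<exists>f. continuous_map Y X f \<and> (\<forall>y\<in>topspace Y. f y \<in> \<phi> y))"

definition strongly_selective :: "'a topology \<Rightarrow> 'b topology \<Rightarrow> bool" where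
  "strongly_selective X Y \<longleftrightarrow>
     (\<forall>\<phi>. lsc_map Y X \<phi> \<longrightarrow> has_continuous_selection Y X \<phi>)"

definition selective :: "'a topology \<Rightarrow> 'b topology \<Rightarrow> bool" where
  "selective X Y \<longleftrightarrow>
     (\<forall>\<phi>. lsc_map Y X \<phi> \<and> (\<forall>y\<in>topspace Y. closedin X (\<phi> y))
          \<longrightarrow> has_continuous_selection Y X \<phi>)"

end

theory Submission
  imports Defs
begin

text \<open>A map into a subspace Z of X is l.s.c. into X as well, since its values meet an open
  set U of X exactly when they meet the open set U \<inter> Z of the subspace. A continuous
  selection into X then takes values in Z automatically; closedness of Z is needed only to
  keep closed values of the subspace closed in X.\<close>

lemma lsc_map_subtopology_values:
  assumes "lsc_map Y (subtopology X Z) \<phi>" and "y \<in> topspace Y"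
  shows "\<phi> y \<subseteq> Z"
  using assms unfolding lsc_map_def by auto

lemma lsc_map_from_subtopology:
  assumes "lsc_map Y (subtopology X Z) \<phi>"
  shows "lsc_map Y X \<phi>"
  unfolding lsc_map_def
proof (intro conjI allI impI ballI)
  fix y assume "y \<in> topspace Y"
  then show "\<phi> y \<subseteq> topspace X" "\<phi> y \<noteq> {}"
    using assms unfolding lsc_map_def by auto
next
  fix U assume "openin X U"
  then have "openin (subtopology X Z) (U \<inter> Z)"
    by (auto simp: openin_subtopology)
  then have "openin Y {y \<in> topspace Y. \<phi> y \<inter> (U \<inter> Z) \<noteq> {}}"
    using assms unfolding lsc_map_def by blast
  moreover have "{y \<in> topspace Y. \<phi> y \<inter> (U \<inter> Z) \<noteq> {}} = {y \<in> topspace Y. \<phi> y \<inter> U \<noteq> {}}"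
    using lsc_map_subtopology_values [OF assms] by blast
  ultimately show "openin Y {y \<in> topspace Y. \<phi> y \<inter> U \<noteq> {}}"
    by simp
qed

lemma has_continuous_selection_subtopology:
  assumes "has_continuous_selection Y X \<phi>" and "\<And>y. y \<in> topspace Y \<Longrightarrow> \<phi> y \<subseteq> Z"
  shows "has_continuous_selection Y (subtopology X Z) \<phi>"
proof -
  obtain f where f: "continuous_map Y X f" "\<forall>y\<in>topspace Y. f y \<in> \<phi> y"
    using assms(1) unfolding has_continuous_selection_def by blast
  then have "f ` topspace Y \<subseteq> Z"
    using assms(2) by blast
  with f show ?thesis
    unfolding has_continuous_selection_def by (auto simp: continuous_map_in_subtopology)
qed

lemma strongly_selective_subtopology:
  assumes "strongly_selective X Y"
  shows "strongly_selective (subtopology X Z) Y"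
  unfolding strongly_selective_def
proof (intro allI impI)
  fix \<phi> assume \<phi>: "lsc_map Y (subtopology X Z) \<phi>"
  then have "has_continuous_selection Y X \<phi>"
    using assms lsc_map_from_subtopology unfolding strongly_selective_def by blast
  then show "has_continuous_selection Y (subtopology X Z) \<phi>"
    using has_continuous_selection_subtopology lsc_map_subtopology_values [OF \<phi>] by blast
qed

lemma selective_closedin_subtopology:
  assumes "selective X Y" and "closedin X Z"
  shows "selective (subtopology X Z) Y"
  unfolding selective_def
proof (intro allI impI, elim conjE)
  fix \<phi>
  assume lsc: "lsc_map Y (subtopology X Z) \<phi>"
    and closed: "\<forall>y\<in>topspace Y. closedin (subtopology X Z) (\<phi> y)"
  have "\<forall>y\<in>topspace Y. closedin X (\<phi> y)"
    using closed closedin_trans_full [OF _ assms(2)] by blast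
  then have "has_continuous_selection Y X \<phi>"
    using assms(1) lsc_map_from_subtopology [OF lsc] unfolding selective_def by blast
  then show "has_continuous_selection Y (subtopology X Z) \<phi>"
    using has_continuous_selection_subtopology lsc_map_subtopology_values [OF lsc] by blast
qed

theorem mainTheorem8:
  fixes X :: "'a topology" and Y :: "'b topology" and Z :: "'a set"
  assumes "t1_space X" and "t1_space Y" and "Z \<subseteq> topspace X"
  shows "(strongly_selective X Y \<longrightarrow> strongly_selective (subtopology X Z) Y) \<and>
         (selective X Y \<and> closedin X Z \<longrightarrow> selective (subtopology X Z) Y)"
  using strongly_selective_subtopology selective_closedin_subtopology by blast

end
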